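(* Let $\mathsf M=\mathrm{diag}(M_1,\dots,M_N)$ and $\bar{\mathsf M}=\mathrm{diag}(\bar M_1,\dots,\bar M_N)$ be real diagonal matrices, $|\alpha\rangle,|\bar\alpha\rangle$ real $N$-columns, $\langle a|,\langle\bar a|$ real $N$-rows, and let $\mathsf A,\bar{\mathsf A}$ be real $N\times N$ matrices satisfying $$\bar{\mathsf M}\mathsf A-\mathsf A\mathsf M=|\alpha\rangle\langle a|,\qquad \mathsf M\bar{\mathsf A}-\bar{\mathsf A}\bar{\mathsf M}=|\bar\alpha\rangle\langle\bar a|.$$ For a real $\zeta$ with $\zeta\neq\pm M_j$, $\zeta\neq\pm\bar M_j$ for all $j$, let $\mathsf H_\zeta=(\mathsf M-\zeta)(\mathsf M+\zeta)^{-1}$ and $\bar{\mathsf H}_\zeta=(\bar{\mathsf M}+\zeta)(\bar{\mathsf M}-\zeta)^{-1}$, and for a finite set $X$ of such parameters let $\mathsf H_X=\prod_{\xi\in X}\mathsf H_\xi$, $\bar{\mathsf H}_X=\prod_{\xi\in X}\bar{\mathsf H}_\xi$ and $$\tau_X=\det\big(\mathsf 1+\mathsf A\mathsf H_X\,\bar{\mathsf A}\bar{\mathsf H}_X\big),\qquad \tau=\tau_\emptyset=\det(\mathsf 1+\mathsf A\bar{\mathsf A}).$$ Then for all pairwise distinct such parameters $\alpha,\beta,\gamma$, $$\tau\,\tau_{\{\alpha,\beta,\gamma\}}=\Gamma_{\alpha,\beta\gamma}\,\tau_{\{\alpha\}}\tau_{\{\beta,\gamma\}}+\Gamma_{\beta,\alpha\gamma}\,\tau_{\{\beta\}}\tau_{\{\alpha,\gamma\}}+\Gamma_{\gamma,\alpha\beta}\,\tau_{\{\gamma\}}\tau_{\{\alpha,\beta\}},$$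 where $\Gamma_{\xi,\eta\zeta}=\dfrac{(\xi+\eta)(\xi+\zeta)}{(\xi-\eta)(\xi-\zeta)}$.
   Context: $\mathsf 1$ is the $N\times N$ identity matrix and $\mathsf M-\zeta$ means $\mathsf M-\zeta\mathsf 1$. The matrices $\mathsf H_\xi$, $\bar{\mathsf H}_\xi$ are diagonal, hence commute with each other. This equation is called the Miwa (discrete BKP) equation. *)

theory Defs
  imports "HOL-Analysis.Analysis"
begin

definition diagm :: "real ^ 'n \<Rightarrow> real ^ 'n ^ 'n" where
  "diagm m = (\<chi> i j. if i = j then m $ i else 0)"

definition outer :: "real ^ 'n \<Rightarrow> real ^ 'n \<Rightarrow> real ^ 'n ^ 'n" where
  "outer p q = (\<chi> i j. p $ i * q $ j)"

definition Hmat :: "real ^ 'n \<Rightarrow> real \<Rightarrow> real ^ 'n ^ 'n" where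
  "Hmat m z = (diagm m - z *\<^sub>R mat 1) ** matrix_inv (diagm m + z *\<^sub>R mat 1)"

definition Hbarmat :: "real ^ 'n \<Rightarrow> real \<Rightarrow> real ^ 'n ^ 'n" where
  "Hbarmat mb z = (diagm mb + z *\<^sub>R mat 1) ** matrix_inv (diagm mb - z *\<^sub>R mat 1)"

text \<open>Product over a finite set of parameters (the factors commute, the order used is
  the increasing order of the parameters).\<close>
definition setprod_mat :: "(real \<Rightarrow> real ^ 'n ^ 'n) \<Rightarrow> real set \<Rightarrow> real ^ 'n ^ 'n" where
  "setprod_mat F X = foldr (\<lambda>\<xi> P. F \<xi> ** P) (sorted_list_of_set X) (mat 1)"

definition tau :: "real ^ 'n \<Rightarrow> real ^ 'n \<Rightarrow> real ^ 'n ^ 'n \<Rightarrow> real ^ 'n ^ 'n \<Rightarrow> real set \<Rightarrow> real" where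
  "tau m mb A Ab X =
     det (mat 1 + A ** setprod_mat (Hmat m) X ** Ab ** setprod_mat (Hbarmat mb) X)"

definition Gam :: "real \<Rightarrow> real \<Rightarrow> real \<Rightarrow> real" where
  "Gam x y z = ((x + y) * (x + z)) / ((x - y) * (x - z))"

definition admissible :: "real ^ 'n \<Rightarrow> real ^ 'n \<Rightarrow> real \<Rightarrow> bool" where
  "admissible m mb z \<longleftrightarrow> (\<forall>j. z \<noteq> m $ j \<and> z \<noteq> - m $ j \<and> z \<noteq> mb $ j \<and> z \<noteq> - mb $ j)"

end

theory Submission
  imports Defs "HOL-Computational_Algebra.Polynomial"
begin

(*
  The Sylvester equation for A turns the entries of Hbar_X A H_X - A into partial fractions:
  for a finite set X of parameters,
    Hbar_X A H_X = A + (sum over x, y in X) C_X(x, y) |(Mbar - x)^-1 alpha> <a| (M + y)^-1,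
  where C_X is minus the inverse of the Cauchy matrix (1 / (x + y)) on X.  By the matrix
  determinant lemma, tau_X = tau * det (1 + C_X W) with
    W(x, y) = <a| (M + x)^-1 Abar (1 + A Abar)^-1 (Mbar - y)^-1 |alpha>,
  and since 1 + C_X W = C_X (W - K_X) this is a ratio of Cauchy-like determinants of the kernel
  P(x, y) = 1 - (x + y) W(x, y).  The second Sylvester equation makes P a kernel of rank two,
  and for such kernels the 3 x 3 determinant ratio expands along its diagonal into the three-term
  identity.  The nondegeneracy used on the way (1 + A Abar and the Cauchy matrix invertible) fails
  only for finitely many values of a parameter on which both sides depend continuously: a factor
  t in front of Abar, or a common shift t of all spectral parameters.
*)

lemma matrix_mul_inv:
  fixes A :: "real^'n^'n"
  assumes "invertible A"
  shows matrix_mul_inv_right: "A ** matrix_inv A = mat 1"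
    and matrix_mul_inv_left: "matrix_inv A ** A = mat 1"
proof -
  have "\<exists>A'. A ** A' = mat 1 \<and> A' ** A = mat 1"
    using assms unfolding invertible_def by blast
  then have "A ** matrix_inv A = mat 1 \<and> matrix_inv A ** A = mat 1"
    unfolding matrix_inv_def by (rule someI_ex)
  then show "A ** matrix_inv A = mat 1" "matrix_inv A ** A = mat 1" by auto
qed

lemma matrix_inv_unique:
  fixes A B :: "real^'n^'n"
  assumes "A ** B = mat 1" "B ** A = mat 1"
  shows "matrix_inv A = B"
proof -
  have "invertible A" using assms unfolding invertible_def by blast
  then have "matrix_inv A = (matrix_inv A ** A) ** B"
    using assms(1) by (simp flip: matrix_mul_assoc)
  then show ?thesis by (simp add: matrix_mul_inv_left \<open>invertible A\<close>)
qed

lemma matrix_add_rdistrib: "((A :: 'a::semiring_1^'n^'m) + B) ** C = A ** C + B ** C"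
  by (simp add: vec_eq_iff matrix_matrix_mult_def sum.distrib distrib_right)

lemma matrix_diff_ldistrib: "(A :: 'a::ring_1^'n^'m) ** (B - C) = A ** B - A ** C"
  by (simp add: vec_eq_iff matrix_matrix_mult_def sum_subtractf right_diff_distrib)

lemma matrix_diff_rdistrib: "((A :: 'a::ring_1^'n^'m) - B) ** C = A ** C - B ** C"
  by (simp add: vec_eq_iff matrix_matrix_mult_def sum_subtractf left_diff_distrib)

lemma diagm_nth [simp]: "diagm u $ i $ j = (if i = j then u $ i else 0)"
  by (simp add: diagm_def)

lemma diagm_mult_nth: "(diagm u ** A) $ i $ j = u $ i * A $ i $ j"
  by (simp add: matrix_matrix_mult_def if_distrib[of "\<lambda>x. x * _"] cong: if_cong)

lemma mult_diagm_nth: "(A ** diagm u) $ i $ j = A $ i $ j * u $ j"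
  by (simp add: matrix_matrix_mult_def if_distrib[of "\<lambda>x. _ * x"] cong: if_cong)

lemma diagm_mult_diagm: "diagm u ** diagm v = diagm (\<chi> i. u $ i * v $ i)"
  by (simp add: vec_eq_iff diagm_mult_nth)

lemma diagm_mult_vec: "diagm u *v v = (\<chi> i. u $ i * v $ i)"
  by (simp add: vec_eq_iff matrix_vector_mult_def if_distrib[of "\<lambda>x. x * _"] cong: if_cong)

lemma mat_1_eq_diagm: "(mat 1 :: real^'n^'n) = diagm (\<chi> i. 1)"
  by (simp add: vec_eq_iff mat_def)

lemma diagm_add_scaleR_mat_1: "diagm u + z *\<^sub>R mat 1 = diagm (\<chi> i. u $ i + z)"
  by (simp add: vec_eq_iff mat_def)

lemma diagm_diff_scaleR_mat_1: "diagm u - z *\<^sub>R mat 1 = diagm (\<chi> i. u $ i - z)"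
  by (simp add: vec_eq_iff mat_def)

lemma matrix_inv_diagm:
  assumes "\<And>i. u $ i \<noteq> 0"
  shows "matrix_inv (diagm u) = diagm (\<chi> i. 1 / u $ i)"
  by (rule matrix_inv_unique) (simp_all add: diagm_mult_diagm assms mat_1_eq_diagm)

lemma admissibleD:
  assumes "admissible m mb z"
  shows "m $ j + z \<noteq> 0" "m $ j - z \<noteq> 0" "mb $ j + z \<noteq> 0" "mb $ j - z \<noteq> 0"
  using assms unfolding admissible_def by (auto simp: add_eq_0_iff)

lemma Hmat_eq_diagm:
  assumes "admissible m mb z"
  shows "Hmat m z = diagm (\<chi> i. (m $ i - z) / (m $ i + z))"
  unfolding Hmat_def diagm_diff_scaleR_mat_1 diagm_add_scaleR_mat_1
  using admissibleD[OF assms]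
  by (simp add: matrix_inv_diagm diagm_mult_diagm divide_inverse)

lemma Hbarmat_eq_diagm:
  assumes "admissible m mb z"
  shows "Hbarmat mb z = diagm (\<chi> i. (mb $ i + z) / (mb $ i - z))"
  unfolding Hbarmat_def diagm_diff_scaleR_mat_1 diagm_add_scaleR_mat_1
  using admissibleD[OF assms]
  by (simp add: matrix_inv_diagm diagm_mult_diagm divide_inverse)

lemma setprod_mat_diagm:
  assumes "finite X" "\<And>x. x \<in> X \<Longrightarrow> F x = diagm (\<chi> i. f x i)"
  shows "setprod_mat F X = diagm (\<chi> i. \<Prod>x\<in>X. f x i)"
proof -
  have "foldr (\<lambda>\<xi> P. F \<xi> ** P) xs (mat 1) = diagm (\<chi> i. \<Prod>x\<leftarrow>xs. f x i)"
    if "set xs \<subseteq> X" for xs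
    using that by (induction xs) (auto simp: mat_1_eq_diagm diagm_mult_diagm assms(2))
  then show ?thesis
    unfolding setprod_mat_def using assms(1)
    by (simp add: prod.distinct_set_conv_list[symmetric])
qed

lemma det_mat_1_add_mult_diagm:
  fixes K :: "real^'n^'n"
  assumes "\<And>i. d $ i \<noteq> 0"
  shows "det (mat 1 + K ** diagm d) = det (mat 1 + diagm d ** K)"
proof -
  let ?E = "diagm (\<chi> i. 1 / d $ i)"
  have "mat 1 + K ** diagm d = (?E + K) ** diagm d"
    "mat 1 + diagm d ** K = diagm d ** (?E + K)"
    using assms
    by (simp_all add: matrix_add_ldistrib matrix_add_rdistrib diagm_mult_diagm mat_1_eq_diagm)
  then show ?thesis by (simp add: det_mul mult.commute)
qed

lemma outer_nth [simp]: "outer u v $ i $ j = u $ i * v $ j"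
  by (simp add: outer_def)

lemma matrix_mul_outer: "A ** outer u v = outer (A *v u) v"
  by (simp add: vec_eq_iff matrix_matrix_mult_def matrix_vector_mult_def sum_distrib_right mult.assoc)

lemma outer_mul_matrix: "outer u v ** A = outer u (v v* A)"
  by (simp add: vec_eq_iff matrix_matrix_mult_def vector_matrix_mult_def sum_distrib_left mult.assoc)

lemma outer_mult_vec: "outer u v *v w = (v \<bullet> w) *\<^sub>R u"
  by (simp add: vec_eq_iff matrix_vector_mult_def inner_vec_def sum_distrib_left mult_ac)

lemma outer_mul_outer: "outer u v ** outer x y = (v \<bullet> x) *\<^sub>R outer u y"
  by (simp add: matrix_mul_outer outer_mult_vec vec_eq_iff mult_ac)

lemma matrix_mul_sum_right: "(A :: 'a::semiring_1^'n^'m) ** (\<Sum>x\<in>X. B x) = (\<Sum>x\<in>X. A ** B x)"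
  by (induction X rule: infinite_finite_induct) (simp_all add: matrix_add_ldistrib)

lemma matrix_mul_sum_left: "(\<Sum>x\<in>X. B x) ** (A :: 'a::semiring_1^'n^'m) = (\<Sum>x\<in>X. B x ** A)"
  by (induction X rule: infinite_finite_induct) (simp_all add: matrix_add_rdistrib)

lemma outer_diff_left: "outer (x - y) z = outer x z - outer y z"
  by (simp add: vec_eq_iff left_diff_distrib)

lemma inner_diagm_mult_vec: "u \<bullet> (diagm d *v v) = (diagm d *v u) \<bullet> v"
  by (simp add: diagm_mult_vec inner_vec_def mult_ac)

section \<open>Determinants of low-rank perturbations\<close>

definition det2 :: "('i \<Rightarrow> 'i \<Rightarrow> real) \<Rightarrow> 'i \<Rightarrow> 'i \<Rightarrow> real" where
  "det2 M i j = M i i * M j j - M i j * M j i"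

definition det3 :: "('i \<Rightarrow> 'i \<Rightarrow> real) \<Rightarrow> 'i \<Rightarrow> 'i \<Rightarrow> 'i \<Rightarrow> real" where
  "det3 M i j k =
     M i i * M j j * M k k + M i j * M j k * M k i + M i k * M j i * M k j
   - M i i * M j k * M k j - M i j * M j i * M k k - M i k * M j j * M k i"

lemma det3_mult:
  assumes "distinct [i, j, k]"
  shows "det3 (\<lambda>x y. \<Sum>w\<in>{i, j, k}. M x w * N w y) i j k = det3 M i j k * det3 N i j k"
proof -
  have nz: "i \<noteq> j" "i \<noteq> k" "j \<noteq> k" using assms by auto
  show ?thesis by (simp add: det3_def nz) algebra
qed

lemma det3_shift: "det3 M (a + t) (b + t) (c + t) = det3 (\<lambda>x y. M (x + t) (y + t)) a b c"
  by (simp add: det3_def)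

lemma det3_cong:
  assumes "\<And>x y. x \<in> {i, j, k} \<Longrightarrow> y \<in> {i, j, k} \<Longrightarrow> M x y = N x y"
  shows "det3 M i j k = det3 N i j k"
  using assms by (simp add: det3_def)

lemma det_mat_1_rows_add_multiple:
  fixes u z :: "real^'n"
  assumes "finite S" "k \<notin> S"
  shows "det (\<chi> i. if i = k then z else if i \<in> S then row i (mat 1) + u $ i *s z else row i (mat 1)
           :: real^'n^'n) = z $ k"
  using assms
proof (induction S rule: finite_induct)
  let ?e = "\<lambda>i. row i (mat 1 :: real^'n^'n)"
  case empty
  have z_eq: "(\<Sum>i\<in>UNIV. z $ i *s ?e i) = z"
    by (simp add: vec_eq_iff row_def mat_def sum_component if_distrib cong: if_cong)
  show ?case
    using cramer_lemma_transpose[of k z "mat 1 :: real^'n^'n"] unfolding z_eq by (simp cong: if_cong)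
next
  let ?e = "\<lambda>i. row i (mat 1 :: real^'n^'n)"
  case (insert j S)
  let ?A = "(\<chi> i. if i = k then z else if i \<in> S then ?e i + u $ i *s z else ?e i) :: real^'n^'n"
  have "j \<noteq> k" using insert by auto
  then have "(\<chi> i. if i = k then z else if i \<in> insert j S then ?e i + u $ i *s z else ?e i)
      = (\<chi> l. if l = j then row j ?A + u $ j *s row k ?A else row l ?A)"
    using insert.hyps by (auto simp: vec_eq_iff row_def)
  then show ?case
    using det_row_operation[OF \<open>j \<noteq> k\<close>, of ?A "u $ j"] insert by simp
qed

lemma det_mat_1_add_outer: "det (mat 1 + outer u z :: real^'n^'n) = 1 + z \<bullet> u"
proof -
  let ?e = "\<lambda>i. row i (mat 1 :: real^'n^'n)"
  have rows_add: "det (\<chi> i. if i \<in> S then ?e i + u $ i *s z else ?e i) = 1 + (\<Sum>i\<in>S. u $ i * z $ i)"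
    if "finite S" for S
    using that
  proof (induction S rule: finite_induct)
    case empty
    have "(\<chi> i. ?e i) = mat 1" by (simp add: vec_eq_iff row_def)
    then show ?case by simp
  next
    case (insert k S)
    let ?c = "\<lambda>i. if i \<in> S then ?e i + u $ i *s z else ?e i"
    have "(\<chi> i. if i \<in> insert k S then ?e i + u $ i *s z else ?e i)
        = (\<chi> i. if i = k then ?e i + u $ k *s z else ?c i)"
      by (auto simp: vec_eq_iff)
    moreover have "(\<chi> i. if i = k then ?e i else ?c i) = (\<chi> i. ?c i)"
      using insert by (auto simp: vec_eq_iff)
    ultimately show ?case
      using det_row_add[of k ?e "\<lambda>_. u $ k *s z" ?c] det_row_mul[of k "u $ k" "\<lambda>_. z" ?c]
        det_mat_1_rows_add_multiple[OF insert(1,2)] insert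
      by (simp add: algebra_simps)
  qed
  have "mat 1 + outer u z = (\<chi> i. if i \<in> UNIV then ?e i + u $ i *s z else ?e i)"
    by (simp add: vec_eq_iff row_def)
  then show ?thesis
    using rows_add[of UNIV] by (simp add: inner_vec_def mult.commute)
qed

lemma add_outer_sum_eq_mult:
  fixes G :: "real^'n^'n"
  assumes "invertible G"
  shows "G + (\<Sum>x\<in>X. outer (u x) (v x)) = G ** (mat 1 + (\<Sum>x\<in>X. outer (matrix_inv G *v u x) (v x)))"
  by (simp add: matrix_add_ldistrib matrix_mul_sum_right matrix_mul_outer matrix_vector_mul_assoc
      matrix_mul_inv_right assms)

lemma det_add_outer:
  fixes G :: "real^'n^'n"
  assumes "invertible G"
  shows "det (G + outer x z) = det G * (1 + z \<bullet> (matrix_inv G *v x))"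
proof -
  have "G + outer x z = G ** (mat 1 + outer (matrix_inv G *v x) z)"
    by (simp add: matrix_add_ldistrib matrix_mul_outer matrix_vector_mul_assoc
        matrix_mul_inv_right assms)
  then show ?thesis by (simp add: det_mul det_mat_1_add_outer)
qed

lemma matrix_inv_mat_1_add_outer:
  assumes "1 + z \<bullet> x \<noteq> 0"
  shows "invertible (mat 1 + outer x z :: real^'n^'n)"
    and "matrix_inv (mat 1 + outer x z :: real^'n^'n) = mat 1 - (1 / (1 + z \<bullet> x)) *\<^sub>R outer x z"
proof -
  show "invertible (mat 1 + outer x z :: real^'n^'n)"
    using assms by (simp add: invertible_det_nz det_mat_1_add_outer)
  let ?c = "1 / (1 + z \<bullet> x)"
  have "?c + ?c * (z \<bullet> x) = 1"
    using assms by (simp add: field_simps)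
  then have "1 - ?c - ?c * (z \<bullet> x) = 0" by simp
  then have "(mat 1 + outer x z) ** (mat 1 - ?c *\<^sub>R outer x z) = (mat 1 :: real^'n^'n)"
    "(mat 1 - ?c *\<^sub>R outer x z) ** (mat 1 + outer x z) = (mat 1 :: real^'n^'n)"
    by (simp_all add: matrix_add_rdistrib matrix_diff_rdistrib matrix_add_ldistrib matrix_diff_ldistrib
        outer_mul_outer matrix_scalar_ac flip: scalar_matrix_assoc, simp_all add: algebra_simps flip: scaleR_diff_left scaleR_add_left)
  then show "matrix_inv (mat 1 + outer x z :: real^'n^'n) = mat 1 - ?c *\<^sub>R outer x z"
    by (rule matrix_inv_unique)
qed

lemma isCont_eq_if_eq_off_finite:
  fixes f g :: "real \<Rightarrow> 'a::t2_space"
  assumes "isCont f x" "isCont g x" "finite S" "\<And>y. y \<notin> S \<Longrightarrow> f y = g y"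
  shows "f x = g x"
proof -
  have "eventually (\<lambda>y. \<forall>s\<in>S. y \<noteq> s) (at x)"
    using assms(3) by (intro eventually_ball_finite) (auto intro: eventually_neq_at_within)
  then have "eventually (\<lambda>y. f y = g y) (at x)"
    by eventually_elim (use assms(4) in auto)
  then have "(g \<longlongrightarrow> f x) (at x)"
    using assms(1) by (simp add: isCont_def tendsto_cong)
  then show ?thesis
    using assms(2) by (simp add: isCont_def tendsto_unique[OF at_neq_bot])
qed

lemma isCont_det:
  assumes "\<And>i j. isCont (\<lambda>t. A t $ i $ j) t0"
  shows "isCont (\<lambda>t. det (A t :: real^'n^'n)) t0"
  unfolding det_def by (intro continuous_intros assms)

lemma isCont_det_mat_1_add_scaleR: "isCont (\<lambda>s. det (mat 1 + s *\<^sub>R K :: real^'n^'n)) s0"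
  by (rule isCont_det) (simp add: mat_def)

lemma finite_affine_zeros: "finite {s :: real. 1 + s * c = 0}"
  by (cases "c = 0") (auto intro: finite_subset[of _ "{- 1 / c}"] simp: field_simps)

lemma det_mat_1_add_outer_pair:
  assumes "i \<noteq> j"
  shows "det (mat 1 + (\<Sum>x\<in>{i, j}. outer (u x) (v x)) :: real^'n^'n)
       = det2 (\<lambda>x y. of_bool (x = y) + v x \<bullet> u y) i j"
proof -
  define f where "f s = det (mat 1 + s *\<^sub>R (\<Sum>x\<in>{i, j}. outer (u x) (v x)) :: real^'n^'n)" for s
  define g where "g s = det2 (\<lambda>x y. of_bool (x = y) + s * (v x \<bullet> u y)) i j" for s
  \<comment> \<open>Sherman--Morrison reduces the claim to rank one where 1 + s (v i \<bullet> u i) is nonzero.\<close>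
  have "f s = g s" if "1 + s * (v i \<bullet> u i) \<noteq> 0" for s
  proof -
    let ?G = "mat 1 + outer (u i) (s *\<^sub>R v i) :: real^'n^'n"
    have nz: "1 + (s *\<^sub>R v i) \<bullet> u i \<noteq> 0" using that by simp
    have "mat 1 + s *\<^sub>R (\<Sum>x\<in>{i, j}. outer (u x) (v x)) = ?G + outer (u j) (s *\<^sub>R v j)"
      using assms by (simp add: vec_eq_iff algebra_simps)
    then have "f s = det ?G * (1 + (s *\<^sub>R v j) \<bullet> (matrix_inv ?G *v u j))"
      unfolding f_def by (simp only: det_add_outer matrix_inv_mat_1_add_outer(1)[OF nz])
    also have "\<dots> = g s"
      using that
      by (simp add: g_def det2_def det_mat_1_add_outer matrix_inv_mat_1_add_outer(2)[OF nz] assms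
          not_sym[OF assms]
          outer_mult_vec inner_diff_right matrix_vector_mult_diff_rdistrib
          flip: scaleR_matrix_vector_assoc)
        (simp add: field_simps)
    finally show ?thesis .
  qed
  moreover have "isCont f 1" "isCont g 1"
    unfolding f_def g_def det2_def by (intro isCont_det_mat_1_add_scaleR continuous_intros)+
  ultimately have "f 1 = g 1"
    using isCont_eq_if_eq_off_finite[where S = "{s. 1 + s * (v i \<bullet> u i) = 0}"]
      finite_affine_zeros by blast
  then show ?thesis by (simp add: f_def g_def)
qed

lemma det_add_outer_pair:
  fixes G :: "real^'n^'n"
  assumes "invertible G" "i \<noteq> j"
  shows "det (G + (\<Sum>x\<in>{i, j}. outer (u x) (v x)))
       = det G * det2 (\<lambda>x y. of_bool (x = y) + v x \<bullet> (matrix_inv G *v u y)) i j"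
  unfolding add_outer_sum_eq_mult[OF assms(1)] det_mul det_mat_1_add_outer_pair[OF assms(2)] ..

lemma det_mat_1_add_outer_triple:
  assumes "distinct [i, j, k]"
  shows "det (mat 1 + (\<Sum>x\<in>{i, j, k}. outer (u x) (v x)) :: real^'n^'n)
       = det3 (\<lambda>x y. of_bool (x = y) + v x \<bullet> u y) i j k"
proof -
  have ne: "i \<noteq> j" "i \<noteq> k" "j \<noteq> k" "j \<noteq> i" "k \<noteq> i" "k \<noteq> j" using assms by auto
  define f where "f s = det (mat 1 + s *\<^sub>R (\<Sum>x\<in>{i, j, k}. outer (u x) (v x)) :: real^'n^'n)" for s
  define g where "g s = det3 (\<lambda>x y. of_bool (x = y) + s * (v x \<bullet> u y)) i j k" for s
  have "f s = g s" if "1 + s * (v i \<bullet> u i) \<noteq> 0" for s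
  proof -
    let ?G = "mat 1 + outer (u i) (s *\<^sub>R v i) :: real^'n^'n"
    have nz: "1 + (s *\<^sub>R v i) \<bullet> u i \<noteq> 0" using that by simp
    have "mat 1 + s *\<^sub>R (\<Sum>x\<in>{i, j, k}. outer (u x) (v x))
        = ?G + (\<Sum>x\<in>{j, k}. outer (u x) (s *\<^sub>R v x))"
      using ne by (simp add: vec_eq_iff algebra_simps)
    then have "f s = det ?G * det2 (\<lambda>x y. of_bool (x = y) + (s *\<^sub>R v x) \<bullet> (matrix_inv ?G *v u y)) j k"
      unfolding f_def
      using det_add_outer_pair[OF matrix_inv_mat_1_add_outer(1)[OF nz] ne(3), of u "\<lambda>x. s *\<^sub>R v x"]
      by (simp add: add.assoc)
    also have "\<dots> = g s"
      using that
      by (simp add: g_def det2_def det3_def det_mat_1_add_outer matrix_inv_mat_1_add_outer(2)[OF nz] ne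
          outer_mult_vec inner_diff_right matrix_vector_mult_diff_rdistrib
          flip: scaleR_matrix_vector_assoc)
        (simp add: divide_simps; algebra)
    finally show ?thesis .
  qed
  moreover have "isCont f 1" "isCont g 1"
    unfolding f_def g_def det3_def by (intro isCont_det_mat_1_add_scaleR continuous_intros)+
  ultimately have "f 1 = g 1"
    using isCont_eq_if_eq_off_finite[where S = "{s. 1 + s * (v i \<bullet> u i) = 0}"]
      finite_affine_zeros by blast
  then show ?thesis by (simp add: f_def g_def)
qed

lemma det_add_outer_triple:
  fixes G :: "real^'n^'n"
  assumes "invertible G" "distinct [i, j, k]"
  shows "det (G + (\<Sum>x\<in>{i, j, k}. outer (u x) (v x)))
       = det G * det3 (\<lambda>x y. of_bool (x = y) + v x \<bullet> (matrix_inv G *v u y)) i j k"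
  unfolding add_outer_sum_eq_mult[OF assms(1)] det_mul det_mat_1_add_outer_triple[OF assms(2)] ..

section \<open>Inverse Cauchy matrices\<close>

(* Minus the inverse of the Cauchy matrix (1 / (x + y)) indexed by X.  The formula has no factor
   x + y in a denominator, so it stays meaningful where the Cauchy matrix is singular. *)
definition cauchy_inv :: "real set \<Rightarrow> real \<Rightarrow> real \<Rightarrow> real" where
  "cauchy_inv X x y =
     (if x = y then -2 * x * (\<Prod>w\<in>X - {x}. ((x + w) / (x - w))\<^sup>2)
      else 4 * x * y * (x + y) / (x - y)\<^sup>2 *
        (\<Prod>w\<in>X - {x, y}. (x + w) * (y + w) / ((x - w) * (y - w))))"

lemma partial_fractions1:
  assumes "u \<notin> {a}" "- v \<notin> {a}"
  shows "(\<Prod>x\<in>{a}. (u + x) / (u - x)) * (\<Prod>x\<in>{a}. (v - x) / (v + x))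
       = 1 + (u - v) * (\<Sum>x\<in>{a}. \<Sum>y\<in>{a}. cauchy_inv {a} x y / ((u - x) * (v + y)))"
proof -
  have nz: "u \<noteq> a" "v + a \<noteq> 0" using assms by (auto simp: add_eq_0_iff)
  show ?thesis by (simp add: cauchy_inv_def) (simp add: divide_simps nz; algebra)
qed

lemma partial_fractions2:
  assumes "a \<noteq> b" "u \<notin> {a, b}" "- v \<notin> {a, b}"
  shows "(\<Prod>x\<in>{a, b}. (u + x) / (u - x)) * (\<Prod>x\<in>{a, b}. (v - x) / (v + x))
       = 1 + (u - v) * (\<Sum>x\<in>{a, b}. \<Sum>y\<in>{a, b}. cauchy_inv {a, b} x y / ((u - x) * (v + y)))"
proof -
  have nz: "u \<noteq> a" "u \<noteq> b" "v + a \<noteq> 0" "v + b \<noteq> 0" "a \<noteq> b" "b \<noteq> a"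
    using assms by (auto simp: add_eq_0_iff)
  show ?thesis using assms(1)
    by (simp add: cauchy_inv_def insert_Diff_if) (simp add: divide_simps nz; algebra)
qed

lemma partial_fractions3:
  assumes "distinct [a, b, c]" "u \<notin> {a, b, c}" "- v \<notin> {a, b, c}"
  shows "(\<Prod>x\<in>{a, b, c}. (u + x) / (u - x)) * (\<Prod>x\<in>{a, b, c}. (v - x) / (v + x))
       = 1 + (u - v) * (\<Sum>x\<in>{a, b, c}. \<Sum>y\<in>{a, b, c}. cauchy_inv {a, b, c} x y / ((u - x) * (v + y)))"
proof -
  have nz: "u \<noteq> a" "u \<noteq> b" "u \<noteq> c" "v + a \<noteq> 0" "v + b \<noteq> 0" "v + c \<noteq> 0"
    "a \<noteq> b" "a \<noteq> c" "b \<noteq> c" "b \<noteq> a" "c \<noteq> a" "c \<noteq> b"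
    using assms by (auto simp: add_eq_0_iff)
  show ?thesis using assms(1)
    by (simp add: cauchy_inv_def insert_Diff_if insert_commute) (simp add: divide_simps nz; algebra)
qed

(* det (P x y / (x + y)) / det (1 / (x + y)) over x, y in {a, b}, resp. {a, b, c}, with the
   factors x + y cleared from the denominators. *)
definition cauchy_ratio2 :: "(real \<Rightarrow> real \<Rightarrow> real) \<Rightarrow> real \<Rightarrow> real \<Rightarrow> real" where
  "cauchy_ratio2 P a b = ((a + b)\<^sup>2 * P a a * P b b - 4 * a * b * P a b * P b a) / (a - b)\<^sup>2"

definition cauchy_ratio3 :: "(real \<Rightarrow> real \<Rightarrow> real) \<Rightarrow> real \<Rightarrow> real \<Rightarrow> real \<Rightarrow> real" where
  "cauchy_ratio3 P a b c =
     (((a + b) * (a + c) * (b + c))\<^sup>2 * P a a * P b b * P c c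
      - 4 * a * b * ((a + c) * (b + c))\<^sup>2 * P a b * P b a * P c c
      - 4 * a * c * ((a + b) * (b + c))\<^sup>2 * P a c * P c a * P b b
      - 4 * b * c * ((a + b) * (a + c))\<^sup>2 * P b c * P c b * P a a
      + 8 * a * b * c * (a + b) * (a + c) * (b + c) * (P a b * P b c * P c a + P a c * P c b * P b a))
     / ((a - b) * (a - c) * (b - c))\<^sup>2"

lemma det2_cauchy:
  assumes "a \<noteq> b"
  shows "det2 (\<lambda>x y. of_bool (x = y) + (\<Sum>w\<in>{a, b}. cauchy_inv {a, b} x w * W w y)) a b
       = cauchy_ratio2 (\<lambda>x y. 1 - (x + y) * W x y) a b"
proof -
  have nz: "a \<noteq> b" "b \<noteq> a" using assms by auto
  show ?thesis
    by (simp add: det2_def cauchy_ratio2_def cauchy_inv_def nz insert_Diff_if)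
      (simp add: divide_simps nz; algebra)
qed

lemma cauchy_inv3_inverse:
  assumes "distinct [a, b, c]" "\<forall>x\<in>{a, b, c}. \<forall>y\<in>{a, b, c}. x + y \<noteq> 0"
    and "x \<in> {a, b, c}" "y \<in> {a, b, c}"
  shows "(\<Sum>w\<in>{a, b, c}. cauchy_inv {a, b, c} x w / (w + y)) = - of_bool (x = y)"
proof -
  have diag: "(\<Sum>w\<in>{a, b, c}. cauchy_inv {a, b, c} a w / (w + a)) = -1"
    and off: "(\<Sum>w\<in>{a, b, c}. cauchy_inv {a, b, c} a w / (w + b)) = 0"
    if "distinct [a, b, c]" "\<forall>x\<in>{a, b, c}. \<forall>y\<in>{a, b, c}. x + y \<noteq> 0" for a b c :: real
  proof -
    have nz: "a \<noteq> b" "a \<noteq> c" "b \<noteq> c" "b \<noteq> a" "c \<noteq> a" "c \<noteq> b"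
      "a \<noteq> 0" "b \<noteq> 0" "c \<noteq> 0" "a + b \<noteq> 0" "a + c \<noteq> 0" "b + c \<noteq> 0"
      "b + a \<noteq> 0" "c + a \<noteq> 0" "c + b \<noteq> 0"
      using that by auto
    show "(\<Sum>w\<in>{a, b, c}. cauchy_inv {a, b, c} a w / (w + a)) = -1"
      by (simp add: cauchy_inv_def nz insert_Diff_if insert_commute) (simp add: divide_simps nz; algebra)
    show "(\<Sum>w\<in>{a, b, c}. cauchy_inv {a, b, c} a w / (w + b)) = 0"
      by (simp add: cauchy_inv_def nz insert_Diff_if insert_commute) (simp add: divide_simps nz; algebra)
  qed
  have perms: "{a, b, c} = {b, a, c}" "{a, b, c} = {c, a, b}" "{a, b, c} = {a, c, b}"
    "{a, b, c} = {b, c, a}" "{a, b, c} = {c, b, a}"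
    by auto
  from assms show ?thesis
    using diag[of a b c] diag[of b a c] diag[of c a b] off[of a b c] off[of a c b]
      off[of b a c] off[of b c a] off[of c a b] off[of c b a]
    by (auto simp flip: perms)
qed

lemma det3_cauchy_inv:
  assumes "distinct [a, b, c]"
  shows "det3 (cauchy_inv {a, b, c}) a b c
       = - 8 * a * b * c * ((a + b) * (a + c) * (b + c))\<^sup>2 / ((a - b) * (a - c) * (b - c))\<^sup>2"
proof -
  have nz: "a \<noteq> b" "a \<noteq> c" "b \<noteq> c" "b \<noteq> a" "c \<noteq> a" "c \<noteq> b" using assms by auto
  show ?thesis
    by (simp add: det3_def cauchy_inv_def nz insert_Diff_if insert_commute)
      (simp add: divide_simps nz; algebra)
qed

lemma det3_cauchy_nonsingular:
  assumes "distinct [a, b, c]" and sums: "\<forall>x\<in>{a, b, c}. \<forall>y\<in>{a, b, c}. x + y \<noteq> 0"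
  shows "det3 (\<lambda>x y. of_bool (x = y) + (\<Sum>w\<in>{a, b, c}. cauchy_inv {a, b, c} x w * W w y)) a b c
       = cauchy_ratio3 (\<lambda>x y. 1 - (x + y) * W x y) a b c"
proof -
  let ?X = "{a, b, c}" and ?C = "cauchy_inv {a, b, c}"
  define P where "P x y = 1 - (x + y) * W x y" for x y
  have "det3 (\<lambda>x y. of_bool (x = y) + (\<Sum>w\<in>?X. ?C x w * W w y)) a b c
      = det3 (\<lambda>x y. \<Sum>w\<in>?X. ?C x w * (W w y - 1 / (w + y))) a b c"
    by (rule det3_cong)
      (simp add: right_diff_distrib sum_subtractf cauchy_inv3_inverse[OF assms]
        flip: divide_inverse)
  also have "\<dots> = det3 ?C a b c * det3 (\<lambda>x y. W x y - 1 / (x + y)) a b c"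
    by (rule det3_mult[OF assms(1)])
  also have "det3 (\<lambda>x y. W x y - 1 / (x + y)) a b c = det3 (\<lambda>x y. - P x y / (x + y)) a b c"
  proof (rule det3_cong)
    fix x y assume "x \<in> ?X" "y \<in> ?X"
    then have "x + y \<noteq> 0" using sums by blast
    then show "W x y - 1 / (x + y) = - P x y / (x + y)"
      by (simp add: P_def field_simps)
  qed
  also have "det3 ?C a b c * det3 (\<lambda>x y. - P x y / (x + y)) a b c = cauchy_ratio3 P a b c"
  proof -
    have nz: "a \<noteq> b" "a \<noteq> c" "b \<noteq> c" "b \<noteq> a" "c \<noteq> a" "c \<noteq> b"
      "a \<noteq> 0" "b \<noteq> 0" "c \<noteq> 0" "a + b \<noteq> 0" "a + c \<noteq> 0" "b + c \<noteq> 0"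
      "b + a \<noteq> 0" "c + a \<noteq> 0" "c + b \<noteq> 0"
      using assms by auto
    show ?thesis
      unfolding det3_cauchy_inv[OF assms(1)]
      by (simp add: det3_def cauchy_ratio3_def) (simp add: divide_simps nz; algebra)
  qed
  finally show ?thesis unfolding P_def .
qed

lemma isCont_cauchy_inv_shift:
  assumes "finite X"
  shows "isCont (\<lambda>t. cauchy_inv ((\<lambda>w. w + t) ` X) (x + t) (y + t)) t0"
proof -
  have "cauchy_inv ((\<lambda>w. w + t) ` X) (x + t) (y + t) =
      (if x = y then -2 * (x + t) * (\<Prod>w\<in>X - {x}. ((x + w + 2 * t) / (x - w))\<^sup>2)
       else 4 * (x + t) * (y + t) * (x + y + 2 * t) / (x - y)\<^sup>2 *
         (\<Prod>w\<in>X - {x, y}. (x + w + 2 * t) * (y + w + 2 * t) / ((x - w) * (y - w))))" for t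
  proof -
    have img: "(\<lambda>w. w + t) ` X - {x + t} = (\<lambda>w. w + t) ` (X - {x})"
      "(\<lambda>w. w + t) ` X - {x + t, y + t} = (\<lambda>w. w + t) ` (X - {x, y})"
      by auto
    show ?thesis
      unfolding cauchy_inv_def img by (simp add: prod.reindex inj_on_def algebra_simps)
  qed
  then show ?thesis
    by (cases "x = y") (auto intro!: continuous_intros)
qed

lemma det3_cauchy_shifted:
  assumes "distinct [a, b, c]" "t \<notin> (\<lambda>(x, y). - (x + y) / 2) ` ({a, b, c} \<times> {a, b, c})"
  shows "det3 (\<lambda>x y. of_bool (x = y) + (\<Sum>w\<in>{a, b, c}.
             cauchy_inv ((\<lambda>w. w + t) ` {a, b, c}) (x + t) (w + t) * W w y)) a b c
       = cauchy_ratio3 (\<lambda>x y. 1 - (x + y) * W (x - t) (y - t)) (a + t) (b + t) (c + t)"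
proof -
  let ?X = "{a, b, c}"
  have "\<forall>x\<in>?X. \<forall>y\<in>?X. (x + t) + (y + t) \<noteq> 0"
  proof (intro ballI notI)
    fix x y assume "x \<in> ?X" "y \<in> ?X" "(x + t) + (y + t) = 0"
    then have "t = - (x + y) / 2" and "(x, y) \<in> ?X \<times> ?X" by auto
    with assms(2) show False by force
  qed
  then have shifted: "distinct [a + t, b + t, c + t]"
    "\<forall>x\<in>{a + t, b + t, c + t}. \<forall>y\<in>{a + t, b + t, c + t}. x + y \<noteq> 0"
    using assms(1) by (auto simp: add.commute)
  have "(\<Sum>w\<in>{a + t, b + t, c + t}. f w) = (\<Sum>w\<in>?X. f (w + t))" for f :: "real \<Rightarrow> real"
    using sum.reindex[of "\<lambda>w. w + t" ?X f] by (simp add: inj_on_def)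
  then have "det3 (\<lambda>x y. of_bool (x = y)
        + (\<Sum>w\<in>?X. cauchy_inv ((\<lambda>w. w + t) ` ?X) (x + t) (w + t) * W w y)) a b c
      = det3 (\<lambda>x y. of_bool (x = y) + (\<Sum>w\<in>{a + t, b + t, c + t}.
        cauchy_inv {a + t, b + t, c + t} x w * W (w - t) (y - t))) (a + t) (b + t) (c + t)"
    unfolding det3_shift by simp
  also have "\<dots> = cauchy_ratio3 (\<lambda>x y. 1 - (x + y) * W (x - t) (y - t)) (a + t) (b + t) (c + t)"
    by (rule det3_cauchy_nonsingular[OF shifted, of "\<lambda>x y. W (x - t) (y - t)", simplified])
  finally show ?thesis .
qed

lemma det3_cauchy:
  assumes "distinct [a, b, c]"
  shows "det3 (\<lambda>x y. of_bool (x = y) + (\<Sum>w\<in>{a, b, c}. cauchy_inv {a, b, c} x w * W w y)) a b c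
       = cauchy_ratio3 (\<lambda>x y. 1 - (x + y) * W x y) a b c"
proof -
  \<comment> \<open>A common shift t of a, b, c leaves all differences, hence all denominators, unchanged,
    while the sums x + y vanish for finitely many t only.\<close>
  let ?X = "{a, b, c}"
  define L where "L t = det3 (\<lambda>x y. of_bool (x = y)
      + (\<Sum>w\<in>?X. cauchy_inv ((\<lambda>w. w + t) ` ?X) (x + t) (w + t) * W w y)) a b c" for t
  define R where "R t = cauchy_ratio3 (\<lambda>x y. 1 - (x + y) * W (x - t) (y - t)) (a + t) (b + t) (c + t)"
    for t
  have "isCont L 0"
    unfolding L_def det3_def by (intro continuous_intros isCont_cauchy_inv_shift) simp_all
  moreover have "isCont R 0"
    using assms unfolding R_def cauchy_ratio3_def by (auto intro!: continuous_intros)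
  ultimately have "L 0 = R 0"
    using isCont_eq_if_eq_off_finite[where S = "(\<lambda>(x, y). - (x + y) / 2) ` (?X \<times> ?X)"]
      det3_cauchy_shifted[OF assms] unfolding L_def R_def by blast
  then show ?thesis by (simp add: L_def R_def)
qed

lemma cauchy_ratio3_rank2_expansion:
  assumes "distinct [a, b, c]"
    and rank2: "\<And>x y. x \<in> {a, b, c} \<Longrightarrow> y \<in> {a, b, c} \<Longrightarrow> P x y = l x * r y + k x * s y"
  shows "cauchy_ratio3 P a b c = Gam a b c * P a a * cauchy_ratio2 P b c
                               + Gam b a c * P b b * cauchy_ratio2 P a c
                               + Gam c a b * P c c * cauchy_ratio2 P a b"
proof -
  have nz: "a \<noteq> b" "a \<noteq> c" "b \<noteq> c" "b \<noteq> a" "c \<noteq> a" "c \<noteq> b" using assms by auto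
  define N2 where "N2 x y = (x + y)\<^sup>2 * P x x * P y y - 4 * x * y * P x y * P y x" for x y
  have numerator: "((a + b) * (a + c) * (b + c))\<^sup>2 * P a a * P b b * P c c
      - 4 * a * b * ((a + c) * (b + c))\<^sup>2 * P a b * P b a * P c c
      - 4 * a * c * ((a + b) * (b + c))\<^sup>2 * P a c * P c a * P b b
      - 4 * b * c * ((a + b) * (a + c))\<^sup>2 * P b c * P c b * P a a
      + 8 * a * b * c * (a + b) * (a + c) * (b + c) * (P a b * P b c * P c a + P a c * P c b * P b a)
    = (a + b) * (a + c) * (a - b) * (a - c) * P a a * N2 b c
    + (b + a) * (b + c) * (b - a) * (b - c) * P b b * N2 a c
    + (c + a) * (c + b) * (c - a) * (c - b) * P c c * N2 a b"
    unfolding N2_def by (simp add: rank2) algebra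
  show ?thesis
    unfolding cauchy_ratio3_def numerator cauchy_ratio2_def Gam_def N2_def[symmetric]
    by (simp add: divide_simps nz) algebra
qed

section \<open>Tau functions as low-rank perturbations\<close>

definition Hdiag :: "real^'n \<Rightarrow> real set \<Rightarrow> real^'n" where
  "Hdiag m X = (\<chi> i. \<Prod>x\<in>X. (m $ i - x) / (m $ i + x))"

definition Hbardiag :: "real^'n \<Rightarrow> real set \<Rightarrow> real^'n" where
  "Hbardiag mb X = (\<chi> i. \<Prod>x\<in>X. (mb $ i + x) / (mb $ i - x))"

lemma tau_eq_det_diagm:
  assumes "finite X" "\<And>x. x \<in> X \<Longrightarrow> admissible m mb x"
  shows "tau m mb A Ab X = det (mat 1 + (diagm (Hbardiag mb X) ** A ** diagm (Hdiag m X)) ** Ab)"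
proof -
  have "setprod_mat (Hmat m) X = diagm (Hdiag m X)"
    using assms unfolding Hdiag_def by (intro setprod_mat_diagm) (auto intro: Hmat_eq_diagm)
  moreover have "setprod_mat (Hbarmat mb) X = diagm (Hbardiag mb X)"
    using assms unfolding Hbardiag_def by (intro setprod_mat_diagm) (auto intro: Hbarmat_eq_diagm)
  moreover have "Hbardiag mb X $ i \<noteq> 0" for i
    using assms(1) admissibleD[OF assms(2)] by (simp add: Hbardiag_def)
  ultimately show ?thesis
    unfolding tau_def using det_mat_1_add_mult_diagm[of "Hbardiag mb X" "A ** diagm (Hdiag m X) ** Ab"]
    by (simp add: matrix_mul_assoc)
qed

definition res_col :: "real^'n \<Rightarrow> real^'n \<Rightarrow> real \<Rightarrow> real^'n" where
  "res_col p mb \<xi> = (\<chi> i. p $ i / (mb $ i - \<xi>))"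

definition res_row :: "real^'n \<Rightarrow> real^'n \<Rightarrow> real \<Rightarrow> real^'n" where
  "res_row q m \<eta> = (\<chi> j. q $ j / (m $ j + \<eta>))"

lemma sylvester_nth:
  assumes "diagm mb ** A - A ** diagm m = outer p q"
  shows "(mb $ i - m $ j) * A $ i $ j = p $ i * q $ j"
proof -
  have "(diagm mb ** A - A ** diagm m) $ i $ j = p $ i * q $ j"
    using assms by simp
  then show ?thesis by (simp add: diagm_mult_nth mult_diagm_nth algebra_simps)
qed

lemma dressing_eq:
  assumes sylvester: "diagm mb ** A - A ** diagm m = outer p q"
    and adm: "\<And>x. x \<in> X \<Longrightarrow> admissible m mb x"
    and partial_fractions: "\<And>u v. u \<notin> X \<Longrightarrow> - v \<notin> X \<Longrightarrow>
      (\<Prod>x\<in>X. (u + x) / (u - x)) * (\<Prod>x\<in>X. (v - x) / (v + x))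
        = 1 + (u - v) * (\<Sum>x\<in>X. \<Sum>y\<in>X. C x y / ((u - x) * (v + y)))"
  shows "diagm (Hbardiag mb X) ** A ** diagm (Hdiag m X)
       = A + (\<Sum>x\<in>X. outer (res_col p mb x) (\<Sum>y\<in>X. C x y *\<^sub>R res_row q m y))"
  unfolding vec_eq_iff
proof (intro allI)
  fix i j
  let ?u = "mb $ i" and ?v = "m $ j"
  have "?u \<notin> X" "- ?v \<notin> X"
    using adm unfolding admissible_def by auto
  let ?S = "\<Sum>x\<in>X. \<Sum>y\<in>X. C x y / ((?u - x) * (?v + y))"
  have "Hbardiag mb X $ i * A $ i $ j * Hdiag m X $ j = A $ i $ j * (Hbardiag mb X $ i * Hdiag m X $ j)"
    by simp
  also have "\<dots> = A $ i $ j * (1 + (?u - ?v) * ?S)"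
    using partial_fractions[OF \<open>?u \<notin> X\<close> \<open>- ?v \<notin> X\<close>] by (simp add: Hbardiag_def Hdiag_def)
  also have "\<dots> = A $ i $ j + ((?u - ?v) * A $ i $ j) * ?S"
    by (simp add: algebra_simps)
  also have "\<dots> = A $ i $ j + (\<Sum>x\<in>X. \<Sum>y\<in>X. p $ i / (?u - x) * (C x y * (q $ j / (?v + y))))"
    unfolding sylvester_nth[OF sylvester] by (simp add: sum_distrib_left mult_ac)
  finally show "(diagm (Hbardiag mb X) ** A ** diagm (Hdiag m X)) $ i $ j
      = (A + (\<Sum>x\<in>X. outer (res_col p mb x) (\<Sum>y\<in>X. C x y *\<^sub>R res_row q m y))) $ i $ j"
    by (simp add: diagm_mult_nth mult_diagm_nth res_col_def res_row_def sum_component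
        sum_distrib_left)
qed

lemma tau_eq_det_add_outer:
  assumes sylvester: "diagm mb ** A - A ** diagm m = outer p q"
    and "finite X" and adm: "\<And>x. x \<in> X \<Longrightarrow> admissible m mb x"
    and partial_fractions: "\<And>u v. u \<notin> X \<Longrightarrow> - v \<notin> X \<Longrightarrow>
      (\<Prod>x\<in>X. (u + x) / (u - x)) * (\<Prod>x\<in>X. (v - x) / (v + x))
        = 1 + (u - v) * (\<Sum>x\<in>X. \<Sum>y\<in>X. C x y / ((u - x) * (v + y)))"
  shows "tau m mb A Ab X = det (mat 1 + A ** Ab
           + (\<Sum>x\<in>X. outer (res_col p mb x) ((\<Sum>y\<in>X. C x y *\<^sub>R res_row q m y) v* Ab)))"
proof -
  have "tau m mb A Ab X = det (mat 1 + (diagm (Hbardiag mb X) ** A ** diagm (Hdiag m X)) ** Ab)"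
    by (rule tau_eq_det_diagm[OF assms(2) adm])
  also have "\<dots> = det (mat 1 + (A + (\<Sum>x\<in>X. outer (res_col p mb x)
      (\<Sum>y\<in>X. C x y *\<^sub>R res_row q m y))) ** Ab)"
    using dressing_eq[OF sylvester adm partial_fractions] by simp
  finally show ?thesis
    by (simp add: matrix_add_rdistrib matrix_mul_sum_left outer_mul_matrix add.assoc)
qed

section \<open>The rank-two kernel\<close>

locale miwa_setting =
  fixes m mb p q pb qb :: "real^'n" and A Ab :: "real^'n^'n"
  assumes sylvester: "diagm mb ** A - A ** diagm m = outer p q"
    and sylvester_bar: "diagm m ** Ab - Ab ** diagm mb = outer pb qb"
    and invertible_G: "invertible (mat 1 + A ** Ab)"
begin

abbreviation G :: "real^'n^'n" where "G \<equiv> mat 1 + A ** Ab"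

definition resolvent :: "real^'n^'n" where "resolvent = Ab ** matrix_inv G"

lemma diagm_mult_G:
  "diagm mb ** G = G ** diagm mb + outer (A *v pb) qb + outer p (q v* Ab)"
proof -
  have "diagm mb ** A = A ** diagm m + outer p q" "diagm m ** Ab = Ab ** diagm mb + outer pb qb"
    using sylvester sylvester_bar by (simp_all add: algebra_simps)
  then have "diagm mb ** A ** Ab = A ** Ab ** diagm mb + outer (A *v pb) qb + outer p (q v* Ab)"
    by (simp add: matrix_add_rdistrib matrix_add_ldistrib outer_mul_matrix matrix_mul_outer
        flip: matrix_mul_assoc)
  then show ?thesis
    by (simp add: matrix_add_ldistrib matrix_add_rdistrib matrix_mul_assoc add_ac)
qed

lemma resolvent_commutator:
  "diagm m ** resolvent - resolvent ** diagm mb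
     = outer (pb - resolvent *v (A *v pb)) (qb v* matrix_inv G) - outer (resolvent *v p) (q v* resolvent)"
    (is "?L = ?R")
proof -
  let ?Gi = "matrix_inv G"
  have "?L ** G = diagm m ** Ab - Ab ** (?Gi ** (diagm mb ** G))"
    by (simp add: resolvent_def matrix_diff_rdistrib matrix_mul_inv_left invertible_G
        flip: matrix_mul_assoc)
  also have "\<dots> = (diagm m ** Ab - Ab ** diagm mb) - Ab ** (?Gi ** outer (A *v pb) qb)
      - Ab ** (?Gi ** outer p (q v* Ab))"
  proof -
    have cancel: "?Gi ** (G ** X) = X" for X :: "real^'n^'n"
      by (simp add: matrix_mul_assoc matrix_mul_inv_left invertible_G)
    show ?thesis
      unfolding diagm_mult_G unfolding matrix_add_ldistrib cancel by (simp add: algebra_simps)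
  qed
  also have "\<dots> = outer (pb - resolvent *v (A *v pb)) qb - outer (resolvent *v p) (q v* Ab)"
    unfolding sylvester_bar
    by (simp add: matrix_mul_outer resolvent_def matrix_vector_mul_assoc matrix_mul_assoc outer_diff_left)
  also have "\<dots> = ?R ** G"
    by (simp add: matrix_diff_rdistrib outer_mul_matrix vector_matrix_mul_assoc resolvent_def
        matrix_mul_inv_left invertible_G flip: matrix_mul_assoc)
  finally have "?L ** G ** ?Gi = ?R ** G ** ?Gi" by simp
  then show ?thesis
    by (simp add: matrix_mul_inv_right invertible_G flip: matrix_mul_assoc)
qed

definition pairing :: "real \<Rightarrow> real \<Rightarrow> real" where
  "pairing x y = res_row q m x \<bullet> (resolvent *v res_col p mb y)"

definition tau_kernel :: "real \<Rightarrow> real \<Rightarrow> real" where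
  "tau_kernel x y = 1 - (x + y) * pairing x y"

lemma tau_kernel_rank2:
  assumes "admissible m mb x" "admissible m mb y"
  shows "tau_kernel x y
       = (1 + res_row q m x \<bullet> (resolvent *v p)) * (1 - q \<bullet> (resolvent *v res_col p mb y))
       + (res_row q m x \<bullet> (pb - resolvent *v (A *v pb))) * ((qb v* matrix_inv G) \<bullet> res_col p mb y)"
proof -
  let ?r = "res_row q m x" and ?c = "res_col p mb y" and ?R = resolvent
  have rows: "diagm m *v ?r = q - x *\<^sub>R ?r" and cols: "diagm mb *v ?c = p + y *\<^sub>R ?c"
    using admissibleD[OF assms(1)] admissibleD[OF assms(2)]
    by (simp_all add: vec_eq_iff diagm_mult_vec res_row_def res_col_def field_simps)
  have "?r \<bullet> ((diagm m ** ?R - ?R ** diagm mb) *v ?c)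
      = (diagm m *v ?r) \<bullet> (?R *v ?c) - ?r \<bullet> (?R *v (diagm mb *v ?c))"
    by (simp add: matrix_vector_mult_diff_rdistrib inner_diff_right inner_diagm_mult_vec
        flip: matrix_vector_mul_assoc)
  also have "\<dots> = q \<bullet> (?R *v ?c) - ?r \<bullet> (?R *v p) - (x + y) * pairing x y"
    unfolding rows cols
    by (simp add: pairing_def inner_diff_left inner_add_right matrix_vector_right_distrib
        matrix_vector_mult_scaleR algebra_simps)
  finally have "?r \<bullet> ((diagm m ** ?R - ?R ** diagm mb) *v ?c)
      = q \<bullet> (?R *v ?c) - ?r \<bullet> (?R *v p) - (x + y) * pairing x y" .
  moreover have "?r \<bullet> ((diagm m ** ?R - ?R ** diagm mb) *v ?c)
      = (?r \<bullet> (pb - ?R *v (A *v pb))) * ((qb v* matrix_inv G) \<bullet> ?c)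
        - (?r \<bullet> (?R *v p)) * (q \<bullet> (?R *v ?c))"
    unfolding resolvent_commutator
    by (simp add: matrix_vector_mult_diff_rdistrib outer_mult_vec inner_diff_right dot_lmul_matrix)
  ultimately show ?thesis
    unfolding tau_kernel_def by algebra
qed

lemma tau_kernel_eq: "tau_kernel = (\<lambda>x y. 1 - (x + y) * pairing x y)"
  by (simp add: tau_kernel_def fun_eq_iff)

lemma dressed_pairing:
  "((\<Sum>y\<in>X. C x y *\<^sub>R res_row q m y) v* Ab) \<bullet> (matrix_inv G *v res_col p mb z)
     = (\<Sum>y\<in>X. C x y * pairing y z)"
  by (simp add: dot_lmul_matrix inner_sum_left pairing_def resolvent_def matrix_vector_mul_assoc)

lemma tau_empty: "tau m mb A Ab {} = det G"
  by (simp add: tau_def setprod_mat_def)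

lemma tau_singleton:
  assumes "admissible m mb a"
  shows "tau m mb A Ab {a} = det G * tau_kernel a a"
proof -
  have "tau m mb A Ab {a}
      = det (G + outer (res_col p mb a) ((cauchy_inv {a} a a *\<^sub>R res_row q m a) v* Ab))"
    using tau_eq_det_add_outer[OF sylvester _ _ partial_fractions1] assms by simp
  also have "\<dots> = det G * tau_kernel a a"
    using dressed_pairing[where C = "\<lambda>_ _. cauchy_inv {a} a a" and X = "{a}" and x = a and z = a]
    by (simp add: det_add_outer invertible_G tau_kernel_def cauchy_inv_def)
  finally show ?thesis .
qed

lemma tau_pair:
  assumes "admissible m mb a" "admissible m mb b" "a \<noteq> b"
  shows "tau m mb A Ab {a, b} = det G * cauchy_ratio2 tau_kernel a b"
proof -
  let ?X = "{a, b}"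
  have "tau m mb A Ab ?X = det (G
      + (\<Sum>x\<in>?X. outer (res_col p mb x) ((\<Sum>y\<in>?X. cauchy_inv ?X x y *\<^sub>R res_row q m y) v* Ab)))"
    using assms by (intro tau_eq_det_add_outer[OF sylvester] partial_fractions2) auto
  also have "\<dots> = det G * det2 (\<lambda>x y. of_bool (x = y) + (\<Sum>w\<in>?X. cauchy_inv ?X x w * pairing w y)) a b"
    by (simp add: det_add_outer_pair[OF invertible_G assms(3)] dressed_pairing)
  also have "\<dots> = det G * cauchy_ratio2 tau_kernel a b"
    by (simp add: det2_cauchy[OF assms(3)] tau_kernel_eq)
  finally show ?thesis .
qed

lemma tau_triple:
  assumes "admissible m mb a" "admissible m mb b" "admissible m mb c" "distinct [a, b, c]"
  shows "tau m mb A Ab {a, b, c} = det G * cauchy_ratio3 tau_kernel a b c"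
proof -
  let ?X = "{a, b, c}"
  have "tau m mb A Ab ?X = det (G
      + (\<Sum>x\<in>?X. outer (res_col p mb x) ((\<Sum>y\<in>?X. cauchy_inv ?X x y *\<^sub>R res_row q m y) v* Ab)))"
    using assms by (intro tau_eq_det_add_outer[OF sylvester] partial_fractions3) auto
  also have "\<dots> = det G * det3 (\<lambda>x y. of_bool (x = y) + (\<Sum>w\<in>?X. cauchy_inv ?X x w * pairing w y)) a b c"
    by (simp add: det_add_outer_triple[OF invertible_G assms(4)] dressed_pairing)
  also have "\<dots> = det G * cauchy_ratio3 tau_kernel a b c"
    by (simp add: det3_cauchy[OF assms(4)] tau_kernel_eq)
  finally show ?thesis .
qed

lemma miwa_identity:
  assumes "admissible m mb a" "admissible m mb b" "admissible m mb c" "distinct [a, b, c]"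
  shows "tau m mb A Ab {} * tau m mb A Ab {a, b, c} =
           Gam a b c * tau m mb A Ab {a} * tau m mb A Ab {b, c}
         + Gam b a c * tau m mb A Ab {b} * tau m mb A Ab {a, c}
         + Gam c a b * tau m mb A Ab {c} * tau m mb A Ab {a, b}"
proof -
  have "cauchy_ratio3 tau_kernel a b c = Gam a b c * tau_kernel a a * cauchy_ratio2 tau_kernel b c
      + Gam b a c * tau_kernel b b * cauchy_ratio2 tau_kernel a c
      + Gam c a b * tau_kernel c c * cauchy_ratio2 tau_kernel a b"
    using assms by (intro cauchy_ratio3_rank2_expansion) (auto intro: tau_kernel_rank2)
  with assms show ?thesis
    by (simp add: tau_empty tau_singleton tau_pair tau_triple algebra_simps)
qed

end

lemma finite_det_mat_1_add_scaleR_zeros: "finite {t. det (mat 1 + t *\<^sub>R K :: real^'n^'n) = 0}"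
proof -
  define P where "P = (\<Sum>\<sigma> | \<sigma> permutes (UNIV :: 'n set).
      [:of_int (sign \<sigma>):] * (\<Prod>i\<in>UNIV. [:(mat 1 :: real^'n^'n) $ i $ \<sigma> i, K $ i $ \<sigma> i:]))"
  have det_eq: "det (mat 1 + t *\<^sub>R K) = poly P t" for t
    unfolding det_def P_def by (simp add: poly_sum poly_prod mult.commute)
  then have "poly P 0 = 1" by (metis det_I scaleR_zero_left add.right_neutral)
  then have "P \<noteq> 0" by auto
  then show ?thesis unfolding det_eq by (rule poly_roots_finite)
qed

lemma tau_scaleR:
  "tau m mb A (t *\<^sub>R Ab) X
     = det (mat 1 + t *\<^sub>R (A ** setprod_mat (Hmat m) X ** Ab ** setprod_mat (Hbarmat mb) X))"
  by (simp add: tau_def matrix_scalar_ac scalar_matrix_assoc)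

lemma isCont_tau_scaleR: "isCont (\<lambda>t. tau m mb A (t *\<^sub>R Ab) X) t0"
  unfolding tau_scaleR by (rule isCont_det_mat_1_add_scaleR)

lemma miwa_setting_scaleR:
  assumes "diagm mb ** A - A ** diagm m = outer p q" "diagm m ** Ab - Ab ** diagm mb = outer pb qb"
    and "det (mat 1 + t *\<^sub>R (A ** Ab)) \<noteq> 0"
  shows "miwa_setting m mb p q (t *\<^sub>R pb) qb A (t *\<^sub>R Ab)"
proof
  show "diagm mb ** A - A ** diagm m = outer p q" by fact
  show "diagm m ** (t *\<^sub>R Ab) - t *\<^sub>R Ab ** diagm mb = outer (t *\<^sub>R pb) qb"
    using assms(2) by (simp add: matrix_scalar_ac flip: scalar_matrix_assoc scaleR_diff_right)
      (simp add: vec_eq_iff)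
  show "invertible (mat 1 + A ** (t *\<^sub>R Ab))"
    using assms(3) by (simp add: invertible_det_nz matrix_scalar_ac flip: scalar_matrix_assoc)
qed

theorem proposition1:
  fixes m mb p pb q qb :: "real ^ 'n"
    and A Ab :: "real ^ 'n ^ 'n"
    and a b c :: real
  assumes "diagm mb ** A - A ** diagm m = outer p q"
    and "diagm m ** Ab - Ab ** diagm mb = outer pb qb"
    and "admissible m mb a" and "admissible m mb b" and "admissible m mb c"
    and "a \<noteq> b" and "a \<noteq> c" and "b \<noteq> c"
  shows "tau m mb A Ab {} * tau m mb A Ab {a, b, c} =
           Gam a b c * tau m mb A Ab {a} * tau m mb A Ab {b, c}
         + Gam b a c * tau m mb A Ab {b} * tau m mb A Ab {a, c}
         + Gam c a b * tau m mb A Ab {c} * tau m mb A Ab {a, b}"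
proof -
  \<comment> \<open>Replacing Ab by t Ab and pb by t pb preserves the hypotheses, and 1 + t A Ab
    is singular for finitely many t only.\<close>
  define F where "F t = tau m mb A (t *\<^sub>R Ab) {} * tau m mb A (t *\<^sub>R Ab) {a, b, c}
      - (Gam a b c * tau m mb A (t *\<^sub>R Ab) {a} * tau m mb A (t *\<^sub>R Ab) {b, c}
       + Gam b a c * tau m mb A (t *\<^sub>R Ab) {b} * tau m mb A (t *\<^sub>R Ab) {a, c}
       + Gam c a b * tau m mb A (t *\<^sub>R Ab) {c} * tau m mb A (t *\<^sub>R Ab) {a, b})" for t
  have F_zero: "F t = 0" if "t \<notin> {t. det (mat 1 + t *\<^sub>R (A ** Ab)) = 0}" for t
    using miwa_setting.miwa_identity[OF miwa_setting_scaleR[OF assms(1,2)]] that assms(3-8)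
    by (simp add: F_def)
  have "isCont F 1"
    unfolding F_def by (intro continuous_intros isCont_tau_scaleR)
  then have "F 1 = 0"
    using isCont_eq_if_eq_off_finite[OF _ continuous_const finite_det_mat_1_add_scaleR_zeros[of "A ** Ab"]]
      F_zero by blast
  then show ?thesis by (simp add: F_def)
qed

end
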